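(* Let $t\ge 2$, let $n_1,\dots,n_t$ be positive integers, and let $G=K_{n_1,\dots,n_t}$ be the complete $t$-partite graph with partite sets $V_1,\dots,V_t$, $|V_i|=n_i$. Let $N_t=\{1,\dots,t\}$ and $f(I)=\sum_{i\in I}n_i$ for $I\subseteq N_t$. Let $p$ be a positive integer with $f(N_t)>p$. Then for every optimal $\gamma_p(G)$-set $D$ and every $i\in N_t\setminus I_D$, $$\left\lceil\frac{p-f(I_D)}{t-|I_D|-1}\right\rceil\le n_i.$$
   Context: A set $S\subseteq V(G)$ is a $p$-dominating set of $G$ if every vertex $v\in V(G)\setminus S$ has at least $p$ neighbors in $S$. The $p$-domination number $\gamma_p(G)$ is the minimum cardinality of a $p$-dominating set of $G$, and a $\gamma_p(G)$-set is a $p$-dominating set of cardinality $\gamma_p(G)$. For $D\subseteq V(G)$ write $D_i=V_i\cap D$ for $i\in N_t$ and $I_D=\{i\in N_t: |D_i|=|V_i|\}$. For a $\gamma_p(G)$-set $D$ with $|I_D|<t$ define $$\mu(D)=\sum_{i\in N_t\setminus I_D}\left|\,|D_i|-\frac{|D|-f(I_D)}{t-|I_D|}\right|.$$ A $\gamma_p(G)$-set $D$ is optimal if: (1) $f(I_D)<p$; (2) $|I_D|\ge |I_S|$ for every $\gamma_p(G)$-set $S$; (3) $\mu(D)\le\mu(S)$ for every $\gamma_p(G)$-set $S$ with $I_S=I_D$. *)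

theory Defs
  imports Complex_Main
begin

definition p_dominating :: "'a set \<Rightarrow> ('a \<Rightarrow> 'a \<Rightarrow> bool) \<Rightarrow> nat \<Rightarrow> 'a set \<Rightarrow> bool" where
  "p_dominating V E p S \<longleftrightarrow> S \<subseteq> V \<and> (\<forall>v \<in> V - S. p \<le> card {u \<in> S. E v u})"

definition gamma_p :: "'a set \<Rightarrow> ('a \<Rightarrow> 'a \<Rightarrow> bool) \<Rightarrow> nat \<Rightarrow> nat" where
  "gamma_p V E p = (LEAST k. \<exists>S. p_dominating V E p S \<and> card S = k)"

definition gamma_p_set :: "'a set \<Rightarrow> ('a \<Rightarrow> 'a \<Rightarrow> bool) \<Rightarrow> nat \<Rightarrow> 'a set \<Rightarrow> bool" where
  "gamma_p_set V E p S \<longleftrightarrow> p_dominating V E p S \<and> card S = gamma_p V E p"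

text \<open>Vertices are pairs (i,k) with i in {1..t} and k < n i; the partite set V_i
  consists of the vertices with first component i; two vertices are adjacent
  iff they lie in different partite sets.\<close>

definition part :: "(nat \<Rightarrow> nat) \<Rightarrow> nat \<Rightarrow> (nat \<times> nat) set" where
  "part n i = {(j, k). j = i \<and> k < n i}"

definition kpart_V :: "nat \<Rightarrow> (nat \<Rightarrow> nat) \<Rightarrow> (nat \<times> nat) set" where
  "kpart_V t n = (\<Union>i \<in> {1..t}. part n i)"

definition kpart_E :: "(nat \<times> nat) \<Rightarrow> (nat \<times> nat) \<Rightarrow> bool" where
  "kpart_E u v \<longleftrightarrow> fst u \<noteq> fst v"

definition fI :: "(nat \<Rightarrow> nat) \<Rightarrow> nat set \<Rightarrow> nat" where
  "fI n I = (\<Sum>i \<in> I. n i)"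

definition I_of :: "nat \<Rightarrow> (nat \<Rightarrow> nat) \<Rightarrow> (nat \<times> nat) set \<Rightarrow> nat set" where
  "I_of t n D = {i \<in> {1..t}. card (part n i \<inter> D) = n i}"

definition mu :: "nat \<Rightarrow> (nat \<Rightarrow> nat) \<Rightarrow> (nat \<times> nat) set \<Rightarrow> real" where
  "mu t n D = (\<Sum>i \<in> {1..t} - I_of t n D.
      \<bar>real (card (part n i \<inter> D))
        - (real (card D) - real (fI n (I_of t n D))) / (real t - real (card (I_of t n D)))\<bar>)"

definition optimal :: "nat \<Rightarrow> (nat \<Rightarrow> nat) \<Rightarrow> nat \<Rightarrow> (nat \<times> nat) set \<Rightarrow> bool" where
  "optimal t n p D \<longleftrightarrow>
     gamma_p_set (kpart_V t n) kpart_E p D \<and>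
     card (I_of t n D) < t \<and>
     fI n (I_of t n D) < p \<and>
     (\<forall>S. gamma_p_set (kpart_V t n) kpart_E p S \<longrightarrow> card (I_of t n S) \<le> card (I_of t n D)) \<and>
     (\<forall>S. gamma_p_set (kpart_V t n) kpart_E p S \<and> I_of t n S = I_of t n D \<longrightarrow> mu t n D \<le> mu t n S)"

end

theory Submission
  imports Defs
begin

text \<open>Suppose p > f(I_D) + n_i. Since V_i is not contained in D, a vertex of V_i - D has at
  least p neighbours in D, so D has more than n_i vertices in partite sets that are neither V_i
  nor full. Trading |V_i - D| of them for the missing vertices of V_i gives a set of the same
  size that is still p-dominating (a partite set that is not full only loses vertices of D,
  so the number of chosen vertices outside it does not drop) and in which V_i is full as well,
  contradicting the maximality of |I_D|. Hence p - f(I_D) \<le> n_i, which bounds the ceiling.\<close>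

lemma part_eq_Times: "part n j = {j} \<times> {..<n j}"
  unfolding part_def by auto

lemma finite_part [simp]: "finite (part n j)"
  by (simp add: part_eq_Times)

lemma card_part [simp]: "card (part n j) = n j"
  by (simp add: part_eq_Times card_cartesian_product)

lemma mem_part_iff: "u \<in> part n j \<longleftrightarrow> fst u = j \<and> snd u < n j"
  unfolding part_def by (cases u) auto

lemma mem_kpart_V_iff: "u \<in> kpart_V t n \<longleftrightarrow> fst u \<in> {1..t} \<and> snd u < n (fst u)"
  unfolding kpart_V_def by (auto simp: mem_part_iff)

lemma finite_kpart_V: "finite (kpart_V t n)"
  unfolding kpart_V_def by auto

lemma kpart_neighbours_eq:
  "S \<subseteq> kpart_V t n \<Longrightarrow> {u \<in> S. kpart_E v u} = S - part n (fst v)"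
  unfolding kpart_E_def by (auto simp: mem_kpart_V_iff mem_part_iff)

lemma card_part_Int_eq_iff: "card (part n j \<inter> D) = n j \<longleftrightarrow> part n j \<subseteq> D"
  using card_subset_eq[of "part n j" "part n j \<inter> D"] by (auto simp: Int_absorb2)

lemma I_of_eq: "I_of t n D = {j \<in> {1..t}. part n j \<subseteq> D}"
  unfolding I_of_def card_part_Int_eq_iff ..

lemma p_dominating_kpart_iff:
  "p_dominating (kpart_V t n) kpart_E p D \<longleftrightarrow>
     D \<subseteq> kpart_V t n \<and> (\<forall>j \<in> {1..t}. \<not> part n j \<subseteq> D \<longrightarrow> p \<le> card (D - part n j))"
proof (cases "D \<subseteq> kpart_V t n")
  case DV: True
  have "(\<forall>v \<in> kpart_V t n - D. p \<le> card (D - part n (fst v))) \<longleftrightarrow>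
        (\<forall>j \<in> {1..t}. \<not> part n j \<subseteq> D \<longrightarrow> p \<le> card (D - part n j))"
  proof
    assume "\<forall>v \<in> kpart_V t n - D. p \<le> card (D - part n (fst v))"
    moreover have "\<exists>v \<in> kpart_V t n - D. fst v = j"
      if j: "j \<in> {1..t}" and "\<not> part n j \<subseteq> D" for j
    proof -
      obtain v where "v \<in> part n j" "v \<notin> D"
        using \<open>\<not> part n j \<subseteq> D\<close> by blast
      then show ?thesis
        using j by (auto simp: mem_kpart_V_iff mem_part_iff)
    qed
    ultimately show "\<forall>j \<in> {1..t}. \<not> part n j \<subseteq> D \<longrightarrow> p \<le> card (D - part n j)"
      by blast
  next
    assume "\<forall>j \<in> {1..t}. \<not> part n j \<subseteq> D \<longrightarrow> p \<le> card (D - part n j)"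
    moreover have "fst v \<in> {1..t} \<and> \<not> part n (fst v) \<subseteq> D" if "v \<in> kpart_V t n - D" for v
      using that by (auto simp: mem_kpart_V_iff mem_part_iff)
    ultimately show "\<forall>v \<in> kpart_V t n - D. p \<le> card (D - part n (fst v))"
      by blast
  qed
  with DV show ?thesis
    unfolding p_dominating_def by (simp add: kpart_neighbours_eq)
qed (simp add: p_dominating_def)

lemma card_Diff_part_eq:
  assumes DV: "D \<subseteq> kpart_V t n" and i: "i \<notin> I_of t n D"
  shows "card (D - part n i) = fI n (I_of t n D) + card {u \<in> D. fst u \<notin> insert i (I_of t n D)}"
proof -
  let ?I = "I_of t n D" and ?Y = "{u \<in> D. fst u \<notin> insert i (I_of t n D)}"
  have finI: "finite ?I"
    unfolding I_of_def by simp
  have "D - part n i = (\<Union>j \<in> ?I. part n j) \<union> ?Y"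
    using DV i by (auto simp: I_of_eq mem_kpart_V_iff mem_part_iff)
  moreover have "(\<Union>j \<in> ?I. part n j) \<inter> ?Y = {}"
    by (auto simp: mem_part_iff)
  moreover have "card (\<Union>j \<in> ?I. part n j) = fI n ?I"
    unfolding fI_def by (subst card_UN_disjoint) (auto simp: finI mem_part_iff)
  moreover have "finite ?Y"
    using DV finite_kpart_V by (simp add: finite_subset)
  ultimately show ?thesis
    using finI by (simp add: card_Un_disjoint)
qed

lemma kpart_exchange_into_part:
  assumes dom: "p_dominating (kpart_V t n) kpart_E p D"
    and i: "i \<in> {1..t} - I_of t n D"
    and X: "X \<subseteq> {u \<in> D. fst u \<notin> insert i (I_of t n D)}"
    and cX: "card X = card (part n i - D)"
  defines "D' \<equiv> (D - X) \<union> (part n i - D)"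
  shows "p_dominating (kpart_V t n) kpart_E p D'"
    and "card D' = card D"
    and "insert i (I_of t n D) \<subseteq> I_of t n D'"
proof -
  have DV: "D \<subseteq> kpart_V t n" and big: "\<And>j. j \<in> {1..t} \<Longrightarrow> \<not> part n j \<subseteq> D \<Longrightarrow> p \<le> card (D - part n j)"
    using dom by (auto simp: p_dominating_kpart_iff)
  have finD: "finite D"
    using DV finite_kpart_V finite_subset by blast
  have XD: "X \<subseteq> D"
    using X by auto
  then have finX: "finite X"
    using finD finite_subset by blast
  show cD': "card D' = card D"
  proof -
    have "card D' = card (D - X) + card (part n i - D)"
      unfolding D'_def by (rule card_Un_disjoint) (use finD in auto)
    also have "\<dots> = card D"
      using cX XD finX card_mono[OF finD XD] by (simp add: card_Diff_subset)
    finally show ?thesis .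
  qed
  have D'V: "D' \<subseteq> kpart_V t n"
    using DV i unfolding D'_def by (auto simp: mem_kpart_V_iff mem_part_iff)
  have finD': "finite D'"
    using D'V finite_kpart_V finite_subset by blast
  have part_D': "part n j \<inter> D' = part n j \<inter> D" if "j \<in> I_of t n D" for j
    using X that i unfolding D'_def by (auto simp: mem_part_iff)
  show I_D': "insert i (I_of t n D) \<subseteq> I_of t n D'"
  proof -
    have "part n i \<subseteq> D'"
      using X unfolding D'_def by (auto simp: mem_part_iff)
    moreover have "part n j \<subseteq> D'" if "j \<in> I_of t n D" for j
      using part_D'[OF that] that by (auto simp: I_of_eq)
    ultimately show ?thesis
      using i by (auto simp: I_of_eq)
  qed
  show "p_dominating (kpart_V t n) kpart_E p D'"
    unfolding p_dominating_kpart_iff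
  proof (intro conjI D'V ballI impI)
    fix j assume j: "j \<in> {1..t}" and nfull: "\<not> part n j \<subseteq> D'"
    then have "j \<notin> insert i (I_of t n D)"
      using I_D' by (auto simp: I_of_eq)
    then have sub: "D' \<inter> part n j \<subseteq> D \<inter> part n j" and "\<not> part n j \<subseteq> D"
      using j unfolding D'_def by (auto simp: I_of_eq mem_part_iff)
    then have "p \<le> card D - card (D \<inter> part n j)"
      using big[OF j] finD by (simp add: card_Diff_subset_Int)
    also have "\<dots> \<le> card D' - card (D' \<inter> part n j)"
      using cD' card_mono[OF _ sub] finD by auto
    finally show "p \<le> card (D' - part n j)"
      using finD' by (simp add: card_Diff_subset_Int)
  qed
qed

lemma p_le_fI_add_if_max_full_parts:
  assumes gs: "gamma_p_set (kpart_V t n) kpart_E p D"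
    and max: "\<forall>S. gamma_p_set (kpart_V t n) kpart_E p S \<longrightarrow> card (I_of t n S) \<le> card (I_of t n D)"
    and i: "i \<in> {1..t} - I_of t n D"
  shows "p \<le> fI n (I_of t n D) + n i"
proof (rule ccontr)
  assume small: "\<not> ?thesis"
  let ?I = "I_of t n D" and ?Y = "{u \<in> D. fst u \<notin> insert i (I_of t n D)}"
  have dom: "p_dominating (kpart_V t n) kpart_E p D"
    using gs by (simp add: gamma_p_set_def)
  then have DV: "D \<subseteq> kpart_V t n" and "p \<le> card (D - part n i)"
    using i by (auto simp: p_dominating_kpart_iff I_of_eq)
  then have "n i < card ?Y"
    using small card_Diff_part_eq[OF DV] i by auto
  moreover have "card (part n i - D) \<le> n i"
    using card_mono[of "part n i" "part n i - D"] by auto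
  ultimately obtain X where X: "X \<subseteq> ?Y" "card X = card (part n i - D)"
    using obtain_subset_with_card_n[of "card (part n i - D)" ?Y] by auto
  define D' where "D' = (D - X) \<union> (part n i - D)"
  note exchange = kpart_exchange_into_part[OF dom i X, folded D'_def]
  have "gamma_p_set (kpart_V t n) kpart_E p D'"
    using gs exchange(1,2) unfolding gamma_p_set_def by simp
  then have "card (I_of t n D') \<le> card ?I"
    using max by blast
  moreover have "card (insert i ?I) \<le> card (I_of t n D')"
    using exchange(3) by (intro card_mono) (simp_all add: I_of_def)
  moreover have "card (insert i ?I) = Suc (card ?I)"
    using i by (simp add: I_of_def)
  ultimately show False
    by linarith
qed

text \<open>For k = 0 the quotient is 0, Isabelle's value of q / 0; this is the case t - |I_D| = 1,
  where the paper's bound is void.\<close>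

lemma ceiling_divide_of_nat_le:
  fixes q :: real
  assumes "0 \<le> q" and "q \<le> real m"
  shows "\<lceil>q / real k\<rceil> \<le> int m"
proof -
  have "q / real k \<le> q"
    using assms(1) by (cases k) (simp_all add: divide_le_eq mult_le_cancel_left1)
  then show ?thesis
    using assms(2) by (simp add: ceiling_le_iff)
qed

theorem lemma7:
  fixes t p :: nat and n :: "nat \<Rightarrow> nat" and D :: "(nat \<times> nat) set" and i :: nat
  assumes "t \<ge> 2"
    and "\<forall>j \<in> {1..t}. n j > 0"
    and "p > 0"
    and "fI n {1..t} > p"
    and "optimal t n p D"
    and "i \<in> {1..t} - I_of t n D"
  shows "\<lceil>(real p - real (fI n (I_of t n D))) / (real t - real (card (I_of t n D)) - 1)\<rceil> \<le> int (n i)"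
proof -
  let ?I = "I_of t n D"
  have "p \<le> fI n ?I + n i"
    using assms(5,6) unfolding optimal_def by (blast intro: p_le_fI_add_if_max_full_parts)
  moreover have "fI n ?I < p" and "card ?I < t"
    using assms(5) unfolding optimal_def by auto
  moreover from \<open>card ?I < t\<close> have "real t - real (card ?I) - 1 = real (t - card ?I - 1)"
    by (simp add: of_nat_diff)
  ultimately show ?thesis
    using ceiling_divide_of_nat_le[of "real p - real (fI n ?I)" "n i" "t - card ?I - 1"] by simp
qed

end
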